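(* Let $\kappa_1<\dots<\kappa_M$ be real and let $A=(a_{k,j})$ be a real $N\times M$ matrix ($N<M$) of rank $N$ in reduced row echelon form that is totally nonnegative and irreducible, with pivot columns $I_0=\{i_1<\dots<i_N\}$. Enumerate the non-pivot nonzero entries of $A$ as $\sigma=1,\dots,\tilde g$ (data $b_\sigma,c_\sigma,\tilde\phi_\sigma$ as in the context). Define for $\sigma\ne\rho$ $$C_{\sigma,\rho}=\frac{(b_\sigma-b_\rho)(c_\sigma-c_\rho)}{(b_\sigma-c_\rho)(c_\sigma-b_\rho)}$$ (so $C_{\sigma,\rho}=0$ if the two entries lie in the same row or in the same column; formally $C_{\sigma,\rho}=e^{2\pi i\tilde\Omega_{\sigma,\rho}}$ with $\tilde\Omega_{\sigma,\rho}=+i\infty$ in that case). Then the KP $\tau$-function $\tau_A(x,y,t)=\sum_{I\in\binom{[M]}{N}}\Delta_I(A)E_I(x,y,t)$ satisfies $$\frac{\tau_A(x,y,t)}{E_{I_0}(x,y,t)}=\tilde\vartheta^{(\tilde g)}_{\tilde g}(\mathbf z;\tilde\Omega)=\sum_{\mathbf m\in\{0,1\}^{\tilde g}}\ \prod_{\sigma<\rho}C_{\sigma,\rho}^{\,m_\sigma m_\rho}\ \exp\Big(\sum_{\sigma=1}^{\tilde g}m_\sigma\tilde\phi_\sigma\Big),$$ with the convention $0^0=1$; here $2\pi i z_\sigma=\tilde\phi_\sigma(x,y,t)$.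
   Context: $\xi_j=\kappa_jx+\kappa_j^2y+\kappa_j^3t$; for $I=\{i_1<\dots<i_N\}\subset[M]$, $E_I=\prod_{a<b}(\kappa_{i_b}-\kappa_{i_a})\exp(\xi_{i_1}+\dots+\xi_{i_N})$ and $\Delta_I(A)$ is the $N\times N$ minor of $A$ on columns $I$. $A$ is totally nonnegative if all $\Delta_I(A)\ge0$; $A$ in reduced row echelon form is irreducible if each row has a nonzero entry besides its pivot and no column is zero. Row $k$ has its pivot in column $i_k$; let $j^{(k)}_1<\dots<j^{(k)}_{n_k}$ be the non-pivot columns with $a_{k,j}\ne0$, $\tilde g_k=n_1+\dots+n_k$, $\tilde g_0=0$, $\tilde g=\tilde g_N$ (the number of nonzero non-pivot entries of $A$). For $\sigma=\tilde g_{k-1}+m$ ($1\le m\le n_k$): $b_\sigma=\kappa_{i_k}$, $c_\sigma=\kappa_{j^{(k)}_m}$, $\phi_\sigma=\xi_{j^{(k)}_m}-\xi_{i_k}$, $e^{\phi^0_\sigma}=|a_{k,j^{(k)}_m}|\prod_{l\ne k}|\kappa_{i_l}-\kappa_{j^{(k)}_m}|/\prod_{l\ne k}|\kappa_{i_l}-\kappa_{i_k}|$, and $\tilde\phi_\sigma=\phi_\sigma+\phi^0_\sigma$. *)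

theory Defs
  imports "Jordan_Normal_Form.Determinant" "HOL-Library.FuncSet" "HOL-Library.Product_Lexorder"
begin

text \<open>Conventions: 0-based indices. Rows of A are 0..N-1, columns 0..M-1,
  with N = dim_row A and M = dim_col A. The spectral parameters are kappa 0 < ... < kappa (M-1).\<close>

definition xi :: "(nat \<Rightarrow> real) \<Rightarrow> nat \<Rightarrow> real \<Rightarrow> real \<Rightarrow> real \<Rightarrow> real" where
  "xi \<kappa> j x y t = \<kappa> j * x + (\<kappa> j)^2 * y + (\<kappa> j)^3 * t"

definition E_fun :: "(nat \<Rightarrow> real) \<Rightarrow> nat set \<Rightarrow> real \<Rightarrow> real \<Rightarrow> real \<Rightarrow> real" where
  "E_fun \<kappa> I x y t =
     (\<Prod>(a,b) \<in> {(a,b). a \<in> I \<and> b \<in> I \<and> a < b}. \<kappa> b - \<kappa> a) * exp (\<Sum>i\<in>I. xi \<kappa> i x y t)"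

definition minor :: "real mat \<Rightarrow> nat set \<Rightarrow> real" where
  "minor A I = det (mat (dim_row A) (dim_row A) (\<lambda>(k,l). A $$ (k, sorted_list_of_set I ! l)))"

definition totally_nonneg :: "real mat \<Rightarrow> bool" where
  "totally_nonneg A \<longleftrightarrow>
     (\<forall>I. I \<subseteq> {..<dim_col A} \<and> card I = dim_row A \<longrightarrow> minor A I \<ge> 0)"

definition rref_with_pivots :: "real mat \<Rightarrow> (nat \<Rightarrow> nat) \<Rightarrow> bool" where
  "rref_with_pivots A piv \<longleftrightarrow>
     (\<forall>k<dim_row A. piv k < dim_col A) \<and>
     (\<forall>k l. k < l \<and> l < dim_row A \<longrightarrow> piv k < piv l) \<and>
     (\<forall>k<dim_row A. A $$ (k, piv k) = 1) \<and>
     (\<forall>k<dim_row A. \<forall>l<dim_row A. l \<noteq> k \<longrightarrow> A $$ (l, piv k) = 0) \<and>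
     (\<forall>k<dim_row A. \<forall>j<piv k. A $$ (k, j) = 0)"

definition irreducible_rref :: "real mat \<Rightarrow> (nat \<Rightarrow> nat) \<Rightarrow> bool" where
  "irreducible_rref A piv \<longleftrightarrow>
     (\<forall>k<dim_row A. \<exists>j<dim_col A. j \<noteq> piv k \<and> A $$ (k, j) \<noteq> 0) \<and>
     (\<forall>j<dim_col A. \<exists>k<dim_row A. A $$ (k, j) \<noteq> 0)"

definition tau :: "real mat \<Rightarrow> (nat \<Rightarrow> real) \<Rightarrow> real \<Rightarrow> real \<Rightarrow> real \<Rightarrow> real" where
  "tau A \<kappa> x y t =
     (\<Sum>I \<in> {I. I \<subseteq> {..<dim_col A} \<and> card I = dim_row A}. minor A I * E_fun \<kappa> I x y t)"

text \<open>Non-pivot nonzero entries (row, column), enumerated row by row and within a row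
  by increasing column (lexicographic order on pairs).\<close>
definition nz_entries :: "real mat \<Rightarrow> (nat \<Rightarrow> nat) \<Rightarrow> (nat \<times> nat) list" where
  "nz_entries A piv = sorted_list_of_set
     {(k,j). k < dim_row A \<and> j < dim_col A \<and> j \<notin> piv ` {..<dim_row A} \<and> A $$ (k,j) \<noteq> 0}"

definition gtilde :: "real mat \<Rightarrow> (nat \<Rightarrow> nat) \<Rightarrow> nat" where
  "gtilde A piv = length (nz_entries A piv)"

definition b_par :: "real mat \<Rightarrow> (nat \<Rightarrow> nat) \<Rightarrow> (nat \<Rightarrow> real) \<Rightarrow> nat \<Rightarrow> real" where
  "b_par A piv \<kappa> \<sigma> = \<kappa> (piv (fst (nz_entries A piv ! \<sigma>)))"

definition c_par :: "real mat \<Rightarrow> (nat \<Rightarrow> nat) \<Rightarrow> (nat \<Rightarrow> real) \<Rightarrow> nat \<Rightarrow> real" where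
  "c_par A piv \<kappa> \<sigma> = \<kappa> (snd (nz_entries A piv ! \<sigma>))"

definition phi0 :: "real mat \<Rightarrow> (nat \<Rightarrow> nat) \<Rightarrow> (nat \<Rightarrow> real) \<Rightarrow> nat \<Rightarrow> real" where
  "phi0 A piv \<kappa> \<sigma> =
     (let (k, j) = nz_entries A piv ! \<sigma> in
      ln (\<bar>A $$ (k, j)\<bar> * (\<Prod>l \<in> {..<dim_row A} - {k}. \<bar>\<kappa> (piv l) - \<kappa> j\<bar>)
          / (\<Prod>l \<in> {..<dim_row A} - {k}. \<bar>\<kappa> (piv l) - \<kappa> (piv k)\<bar>)))"

definition phi_tilde :: "real mat \<Rightarrow> (nat \<Rightarrow> nat) \<Rightarrow> (nat \<Rightarrow> real) \<Rightarrow> nat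
    \<Rightarrow> real \<Rightarrow> real \<Rightarrow> real \<Rightarrow> real" where
  "phi_tilde A piv \<kappa> \<sigma> x y t =
     (let (k, j) = nz_entries A piv ! \<sigma> in
      xi \<kappa> j x y t - xi \<kappa> (piv k) x y t + phi0 A piv \<kappa> \<sigma>)"

definition C_coef :: "real mat \<Rightarrow> (nat \<Rightarrow> nat) \<Rightarrow> (nat \<Rightarrow> real) \<Rightarrow> nat \<Rightarrow> nat \<Rightarrow> real" where
  "C_coef A piv \<kappa> \<sigma> \<rho> =
     (b_par A piv \<kappa> \<sigma> - b_par A piv \<kappa> \<rho>) * (c_par A piv \<kappa> \<sigma> - c_par A piv \<kappa> \<rho>) /
     ((b_par A piv \<kappa> \<sigma> - c_par A piv \<kappa> \<rho>) * (c_par A piv \<kappa> \<sigma> - b_par A piv \<kappa> \<rho>))"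

text \<open>The (degenerate) Riemann theta function; note 0^0 = 1 in Isabelle.\<close>
definition theta_tilde :: "real mat \<Rightarrow> (nat \<Rightarrow> nat) \<Rightarrow> (nat \<Rightarrow> real) \<Rightarrow> real \<Rightarrow> real \<Rightarrow> real \<Rightarrow> real" where
  "theta_tilde A piv \<kappa> x y t =
     (let g = gtilde A piv in
      \<Sum>m \<in> {..<g} \<rightarrow>\<^sub>E {0::nat, 1}.
        (\<Prod>\<sigma><g. \<Prod>\<rho>\<in>{\<sigma><..<g}. C_coef A piv \<kappa> \<sigma> \<rho> ^ (m \<sigma> * m \<rho>)) *
        exp (\<Sum>\<sigma><g. real (m \<sigma>) * phi_tilde A piv \<kappa> \<sigma> x y t))"

end

theory Submission
  imports Defs
begin

text \<open>Expanding each maximal minor by the Leibniz formula, and absorbing the sign of every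
  permutation into the Vandermonde factor of E_I, writes tau_A as a sum over injective column
  choices c of the terms prod_k a_{k,c k} * V(kappa o c) * exp(sum_k xi_{c k}). Only choices sending
  every row k to its pivot or to a nonzero non-pivot entry of row k survive, and these correspond to
  the 0/1 vectors of the theta sum that mark at most one entry per row; the vectors marking two
  entries of one row have vanishing coefficient C. For a surviving choice, V(kappa o c) / V(kappa o piv)
  factors into one factor per replaced pivot and one cross ratio C per pair of replaced pivots. The
  factor of a single replacement i_k -> j, times a_{k,j}, is up to positive Vandermonde factors
  the minor of A on the pivot columns with i_k replaced by j; total nonnegativity makes it positive,
  so it equals e^{phi0}.\<close>

definition strict_pairs :: "nat \<Rightarrow> (nat \<times> nat) set" where
  "strict_pairs n = {(a, b). a < b \<and> b < n}"

lemma finite_strict_pairs [simp]: "finite (strict_pairs n)"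
  by (rule finite_subset[of _ "{..<n} \<times> {..<n}"]) (auto simp: strict_pairs_def)

definition vandermonde :: "(nat \<Rightarrow> 'a::comm_ring_1) \<Rightarrow> nat \<Rightarrow> 'a" where
  "vandermonde x n = (\<Prod>(a, b)\<in>strict_pairs n. x b - x a)"

definition inversion_sign :: "(nat \<Rightarrow> nat) \<Rightarrow> nat \<Rightarrow> int" where
  "inversion_sign q n = (\<Prod>(a, b)\<in>strict_pairs n. if q a < q b then 1 else -1)"

lemma vandermonde_cong: "(\<And>k. k < n \<Longrightarrow> x k = y k) \<Longrightarrow> vandermonde x n = vandermonde y n"
  unfolding vandermonde_def strict_pairs_def by (intro prod.cong) auto

lemma vandermonde_eq_0:
  assumes "a < n" "b < n" "a \<noteq> b" "x a = x b"
  shows "vandermonde x n = 0"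
proof -
  have "(min a b, max a b) \<in> strict_pairs n" using assms by (auto simp: strict_pairs_def)
  moreover have "x (max a b) - x (min a b) = 0" using assms by (simp add: min_def max_def)
  ultimately show ?thesis unfolding vandermonde_def by (intro prod_zero) force+
qed

lemma vandermonde_pos:
  fixes x :: "nat \<Rightarrow> 'a::linordered_idom"
  shows "(\<And>a b. a < b \<Longrightarrow> b < n \<Longrightarrow> x a < x b) \<Longrightarrow> vandermonde x n > 0"
  unfolding vandermonde_def strict_pairs_def by (rule prod_pos) auto

lemma vandermonde_comp_permutes_inversions:
  assumes q: "q permutes {..<n}"
  shows "vandermonde (x \<circ> q) n = of_int (inversion_sign q n) * vandermonde x n"
proof -
  define g where "g = (\<lambda>(a, b). (min (q a) (q b), max (q a) (q b)))"
  have q_less: "\<And>a. a < n \<Longrightarrow> q a < n" using q by (meson lessThan_iff permutes_in_image)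
  have q_inj: "\<And>a b. q a = q b \<Longrightarrow> a = b" using q by (meson permutes_inj injD)
  have "g ` strict_pairs n \<subseteq> strict_pairs n"
  proof
    fix z assume "z \<in> g ` strict_pairs n"
    then obtain a b where ab: "a < b" "b < n" "z = g (a, b)" unfolding strict_pairs_def by auto
    have "q a \<noteq> q b" using ab q_inj by (metis less_irrefl)
    then show "z \<in> strict_pairs n"
      using q_less ab unfolding g_def strict_pairs_def by (auto simp: min_def max_def)
  qed
  moreover have "inj_on g (strict_pairs n)"
  proof (rule inj_onI)
    fix u v assume u: "u \<in> strict_pairs n" and v: "v \<in> strict_pairs n" and e: "g u = g v"
    obtain a b where "u = (a, b)" "a < b" using u unfolding strict_pairs_def by blast
    moreover obtain c d where "v = (c, d)" "c < d" using v unfolding strict_pairs_def by blast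
    ultimately have "{q a, q b} = {q c, q d}" "a < b" "c < d" "u = (a, b)" "v = (c, d)"
      using e unfolding g_def by (auto simp: min_def max_def split: if_splits)
    then show "u = v" using q_inj by (metis doubleton_eq_iff less_asym)
  qed
  ultimately have g_bij: "bij_betw g (strict_pairs n) (strict_pairs n)"
    by (simp add: bij_betw_def endo_inj_surj)
  have "vandermonde (x \<circ> q) n = (\<Prod>z\<in>strict_pairs n. (if q (fst z) < q (snd z) then 1 else -1) *
           (\<lambda>(a, b). x b - x a) (g z))"
    unfolding vandermonde_def
    by (intro prod.cong) (auto simp: g_def min_def max_def)
  also have "\<dots> = of_int (inversion_sign q n) * (\<Prod>z\<in>strict_pairs n. (\<lambda>(a, b). x b - x a) (g z))"
    unfolding prod.distrib inversion_sign_def of_int_prod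
    by (intro arg_cong2[where f = "(*)"] prod.cong) (auto simp: case_prod_beta')
  also have "(\<Prod>z\<in>strict_pairs n. (\<lambda>(a, b). x b - x a) (g z)) = vandermonde x n"
    unfolding vandermonde_def using prod.reindex_bij_betw[OF g_bij] by simp
  finally show ?thesis .
qed

lemma inversion_sign_transpose:
  assumes "i < j" "j < n"
  shows "inversion_sign (Transposition.transpose i j) n = -1"
proof -
  let ?t = "Transposition.transpose i j"
  define Inv where "Inv = ({i} \<times> {i<..j}) \<union> ({i<..<j} \<times> {j})"
  have Inv_eq: "{z \<in> strict_pairs n. \<not> ?t (fst z) < ?t (snd z)} = Inv"
    using assms unfolding Inv_def strict_pairs_def
    by (auto simp: Transposition.transpose_def split: if_splits)
  have "card Inv = Suc (2 * (j - i - 1))"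
    using assms unfolding Inv_def by (subst card_Un_disjoint) auto
  have "inversion_sign ?t n = (\<Prod>z\<in>strict_pairs n. if ?t (fst z) < ?t (snd z) then 1 else -1)"
    unfolding inversion_sign_def by (simp add: case_prod_beta')
  also have "\<dots> = (\<Prod>z\<in>{z \<in> strict_pairs n. \<not> ?t (fst z) < ?t (snd z)}. -1)"
    by (rule prod.mono_neutral_cong_right) auto
  also have "\<dots> = (-1) ^ card Inv" by (simp add: Inv_eq)
  finally show ?thesis using \<open>card Inv = _\<close> by simp
qed

lemma vandermonde_comp_permutes:
  assumes "p permutes {..<n}"
  shows "vandermonde (x \<circ> p) n = signof p * vandermonde x n"
  using assms finite_lessThan
proof (induction arbitrary: x rule: permutes_induct)
  case id
  then show ?case by simp
next
  case (swap a b p)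
  let ?t = "Transposition.transpose a b"
  have "inversion_sign ?t n = -1"
    using swap(1-3) inversion_sign_transpose[of a b n] inversion_sign_transpose[of b a n]
    by (cases "a < b") (auto simp: transpose_commute)
  then have t: "vandermonde (x \<circ> ?t) n = - vandermonde x n"
    using vandermonde_comp_permutes_inversions[OF permutes_swap_id[OF swap(1,2)]] by simp
  have s: "sign (?t \<circ> p) = - sign p"
    using swap(3) sign_compose[OF permutation_swap_id permutes_imp_permutation[OF _ \<open>p permutes {..<n}\<close>]]
    by (simp add: sign_swap_id)
  have "vandermonde (x \<circ> (?t \<circ> p)) n = vandermonde ((x \<circ> ?t) \<circ> p) n"
    by (simp add: comp_assoc)
  also have "\<dots> = signof p * vandermonde (x \<circ> ?t) n" by (rule swap.IH)
  also have "\<dots> = signof (?t \<circ> p) * vandermonde x n" using t s by simp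
  finally show ?case .
qed

lemma prod_off_diagonal:
  fixes f :: "nat \<Rightarrow> nat \<Rightarrow> 'a::comm_monoid_mult"
  shows "(\<Prod>k<n. \<Prod>l\<in>{..<n} - {k}. f k l) = (\<Prod>(a, b)\<in>strict_pairs n. f a b * f b a)"
proof -
  let ?swap = "\<lambda>(a, b). (b, a)"
  have off: "Sigma {..<n} (\<lambda>k. {..<n} - {k}) = strict_pairs n \<union> ?swap ` strict_pairs n"
    unfolding strict_pairs_def by (auto simp: image_iff)
  have "(\<Prod>k<n. \<Prod>l\<in>{..<n} - {k}. f k l) = (\<Prod>z\<in>Sigma {..<n} (\<lambda>k. {..<n} - {k}). f (fst z) (snd z))"
    by (subst prod.Sigma) (auto simp: case_prod_beta')
  also have "\<dots> = (\<Prod>z\<in>strict_pairs n. f (fst z) (snd z)) * (\<Prod>z\<in>?swap ` strict_pairs n. f (fst z) (snd z))"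
    unfolding off by (rule prod.union_disjoint) (simp_all, force simp: strict_pairs_def)
  also have "(\<Prod>z\<in>?swap ` strict_pairs n. f (fst z) (snd z)) = (\<Prod>z\<in>strict_pairs n. f (snd z) (fst z))"
    by (subst prod.reindex) (auto simp: inj_on_def case_prod_beta')
  finally show ?thesis by (simp add: prod.distrib case_prod_beta')
qed

definition cross_ratio :: "(nat \<Rightarrow> 'a::field) \<Rightarrow> (nat \<Rightarrow> 'a) \<Rightarrow> nat \<Rightarrow> nat \<Rightarrow> 'a" where
  "cross_ratio p y a b = (p a - p b) * (y a - y b) / ((p a - y b) * (y a - p b))"

lemma vandermonde_ratio:
  fixes p y :: "nat \<Rightarrow> 'a::field"
  assumes R: "R \<subseteq> {..<n}"
    and y_p: "\<And>k. k < n \<Longrightarrow> k \<notin> R \<Longrightarrow> y k = p k"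
    and p_inj: "\<And>a b. a < n \<Longrightarrow> b < n \<Longrightarrow> a \<noteq> b \<Longrightarrow> p a \<noteq> p b"
    and p_y: "\<And>a b. a < n \<Longrightarrow> b < n \<Longrightarrow> a \<noteq> b \<Longrightarrow> b \<in> R \<Longrightarrow> p a \<noteq> y b"
  shows "vandermonde y n = vandermonde p n * (\<Prod>k\<in>R. \<Prod>l\<in>{..<n} - {k}. (p l - y k) / (p l - p k))
                 * (\<Prod>(a, b)\<in>strict_pairs n \<inter> R \<times> R. cross_ratio p y a b)"
proof -
  let ?h = "\<lambda>k l. (p l - y k) / (p l - p k)"
  have h_R: "(\<Prod>k\<in>R. \<Prod>l\<in>{..<n} - {k}. ?h k l) = (\<Prod>(a, b)\<in>strict_pairs n. ?h a b * ?h b a)"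
  proof -
    have "(\<Prod>k\<in>R. \<Prod>l\<in>{..<n} - {k}. ?h k l) = (\<Prod>k<n. \<Prod>l\<in>{..<n} - {k}. ?h k l)"
      using R y_p p_inj by (intro prod.mono_neutral_left prod.neutral ballI) auto
    then show ?thesis by (simp add: prod_off_diagonal)
  qed
  have cross_R: "(\<Prod>(a, b)\<in>strict_pairs n \<inter> R \<times> R. cross_ratio p y a b)
      = (\<Prod>(a, b)\<in>strict_pairs n. if a \<in> R \<and> b \<in> R then cross_ratio p y a b else 1)"
    by (rule prod.mono_neutral_cong_left) (auto split: if_splits)
  have factor: "y b - y a = (p b - p a) * (?h a b * ?h b a) * (if a \<in> R \<and> b \<in> R then cross_ratio p y a b else 1)"
    if "(a, b) \<in> strict_pairs n" for a b
  proof -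
    have ab: "a < b" "b < n" using that unfolding strict_pairs_def by auto
    have pa_pb: "p a - p b \<noteq> 0" "p b - p a \<noteq> 0" using p_inj[of a b] ab by auto
    consider "a \<in> R" "b \<in> R" | "a \<notin> R" | "b \<notin> R" by blast
    then show ?thesis
    proof cases
      case 1
      have "p a - y b \<noteq> 0" "y a - p b \<noteq> 0" using p_y[of a b] p_y[of b a] ab 1 by auto
      with 1 pa_pb show ?thesis unfolding cross_ratio_def
        by (simp add: divide_simps) (simp add: algebra_simps)
    qed (use y_p[of a] y_p[of b] ab pa_pb in \<open>auto simp: field_simps\<close>)
  qed
  have "vandermonde y n = (\<Prod>(a, b)\<in>strict_pairs n. (p b - p a) * (?h a b * ?h b a)
      * (if a \<in> R \<and> b \<in> R then cross_ratio p y a b else 1))"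
    unfolding vandermonde_def by (rule prod.cong) (auto simp: factor)
  also have "\<dots> = vandermonde p n * (\<Prod>(a, b)\<in>strict_pairs n. ?h a b * ?h b a)
      * (\<Prod>(a, b)\<in>strict_pairs n. if a \<in> R \<and> b \<in> R then cross_ratio p y a b else 1)"
    unfolding vandermonde_def prod.distrib[symmetric] by (simp add: case_prod_beta')
  finally show ?thesis unfolding h_R cross_R .
qed

lemma E_fun_image:
  assumes mono: "\<And>a b. a < b \<Longrightarrow> b < n \<Longrightarrow> f a < f b"
  shows "E_fun \<kappa> (f ` {..<n}) x y t = vandermonde (\<kappa> \<circ> f) n * exp (\<Sum>k<n. xi \<kappa> (f k) x y t)"
proof -
  have inj: "inj_on f {..<n}"
    by (rule inj_onI) (metis lessThan_iff linorder_neqE_nat mono order_less_irrefl)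
  have pairs: "{(a, b). a \<in> f ` {..<n} \<and> b \<in> f ` {..<n} \<and> a < b} = map_prod f f ` strict_pairs n"
    using mono unfolding strict_pairs_def
    by (auto simp: image_iff) (metis linorder_neqE_nat order_less_asym)
  have "inj_on (map_prod f f) (strict_pairs n)"
    using inj unfolding strict_pairs_def inj_on_def by auto
  then have "(\<Prod>(a, b)\<in>{(a, b). a \<in> f ` {..<n} \<and> b \<in> f ` {..<n} \<and> a < b}. \<kappa> b - \<kappa> a)
      = vandermonde (\<kappa> \<circ> f) n"
    unfolding pairs vandermonde_def by (simp add: prod.reindex case_prod_beta')
  then show ?thesis unfolding E_fun_def by (simp add: sum.reindex[OF inj])
qed

lemma sorted_list_of_set_nth_less:
  "finite I \<Longrightarrow> a < b \<Longrightarrow> b < card I \<Longrightarrow> sorted_list_of_set I ! a < sorted_list_of_set I ! b"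
  using sorted_wrt_nth_less[OF sorted_list_of_set.strict_sorted_key_list_of_set] by auto

lemma bij_betw_sorted_list_of_set_nth:
  "finite I \<Longrightarrow> bij_betw ((!) (sorted_list_of_set I)) {..<card I} I"
  by (rule bij_betw_nth) simp_all

definition bijections_onto :: "nat \<Rightarrow> nat set \<Rightarrow> (nat \<Rightarrow> nat) set" where
  "bijections_onto n I = {c \<in> {..<n} \<rightarrow>\<^sub>E I. bij_betw c {..<n} I}"

lemma bij_betw_permutes_bijections_onto:
  assumes f: "bij_betw f {..<n} I"
  shows "bij_betw (\<lambda>p. restrict (f \<circ> p) {..<n}) {p. p permutes {..<n}} (bijections_onto n I)"
proof (rule bij_betw_byWitness[where f' = "\<lambda>c k. if k < n then the_inv_into {..<n} f (c k) else k"])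
  have f_inj: "inj_on f {..<n}" and f_im: "f ` {..<n} = I" using f by (auto simp: bij_betw_def)
  have p_less: "\<And>p i. p permutes {..<n} \<Longrightarrow> i < n \<Longrightarrow> p i < n"
    by (metis lessThan_iff permutes_in_image)
  show "\<forall>p\<in>{p. p permutes {..<n}}. (\<lambda>k. if k < n then the_inv_into {..<n} f (restrict (f \<circ> p) {..<n} k) else k) = p"
    using f_inj p_less by (auto simp: the_inv_into_f_f permutes_not_in)
  show "\<forall>c\<in>bijections_onto n I. restrict (f \<circ> (\<lambda>k. if k < n then the_inv_into {..<n} f (c k) else k)) {..<n} = c"
    using f_im f_inj
    by (auto simp: bijections_onto_def PiE_def Pi_iff extensional_def fun_eq_iff intro: f_the_inv_into_f)
  show "(\<lambda>p. restrict (f \<circ> p) {..<n}) ` {p. p permutes {..<n}} \<subseteq> bijections_onto n I"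
  proof clarify
    fix p assume p: "p permutes {..<n}"
    have fp: "bij_betw (f \<circ> p) {..<n} I" by (rule bij_betw_trans[OF permutes_imp_bij[OF p] f])
    then have "bij_betw (restrict (f \<circ> p) {..<n}) {..<n} I"
      by (rule bij_betw_cong[THEN iffD1, rotated]) simp
    moreover have "restrict (f \<circ> p) {..<n} \<in> {..<n} \<rightarrow>\<^sub>E I" using bij_betw_apply[OF fp] by auto
    ultimately show "restrict (f \<circ> p) {..<n} \<in> bijections_onto n I"
      unfolding bijections_onto_def by simp
  qed
  show "(\<lambda>c k. if k < n then the_inv_into {..<n} f (c k) else k) ` bijections_onto n I \<subseteq> {p. p permutes {..<n}}"
  proof clarify
    fix c assume "c \<in> bijections_onto n I"
    then have "bij_betw (the_inv_into {..<n} f \<circ> c) {..<n} {..<n}"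
      unfolding bijections_onto_def using bij_betw_trans bij_betw_the_inv_into[OF f] by blast
    then have "bij_betw (\<lambda>k. if k < n then the_inv_into {..<n} f (c k) else k) {..<n} {..<n}"
      by (rule bij_betw_cong[THEN iffD1, rotated]) auto
    then show "(\<lambda>k. if k < n then the_inv_into {..<n} f (c k) else k) permutes {..<n}"
      by (rule bij_imp_permutes) auto
  qed
qed

text \<open>Leibniz expansion of the minor, with the sign of each permutation absorbed into the
  Vandermonde product.\<close>

lemma minor_times_vandermonde:
  assumes I: "finite I" "card I = dim_row A"
  shows "minor A I * vandermonde (\<kappa> \<circ> (!) (sorted_list_of_set I)) (dim_row A)
     = (\<Sum>c\<in>bijections_onto (dim_row A) I. (\<Prod>k<dim_row A. A $$ (k, c k)) * vandermonde (\<kappa> \<circ> c) (dim_row A))"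
proof -
  define n where "n = dim_row A"
  define s where "s = sorted_list_of_set I"
  let ?P = "{p. p permutes {..<n}}"
  have s_bij: "bij_betw ((!) s) {..<n} I"
    unfolding s_def n_def using bij_betw_sorted_list_of_set_nth[OF I(1)] by (simp add: I(2))
  have minor: "minor A I = (\<Sum>p\<in>?P. signof p * (\<Prod>i<n. A $$ (i, s ! p i)))"
    unfolding minor_def n_def[symmetric] s_def[symmetric]
    by (subst det_def'[of _ n]) (auto simp: atLeast0LessThan permutes_in_image intro!: sum.cong prod.cong)
  have V_perm: "vandermonde (\<kappa> \<circ> restrict ((!) s \<circ> p) {..<n}) n = signof p * vandermonde (\<kappa> \<circ> (!) s) n"
    if "p permutes {..<n}" for p
  proof -
    have "vandermonde (\<kappa> \<circ> restrict ((!) s \<circ> p) {..<n}) n = vandermonde ((\<kappa> \<circ> (!) s) \<circ> p) n"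
      by (rule vandermonde_cong) simp
    then show ?thesis using vandermonde_comp_permutes[OF that] by simp
  qed
  from minor have "minor A I * vandermonde (\<kappa> \<circ> (!) s) n
      = (\<Sum>p\<in>?P. (\<Prod>i<n. A $$ (i, s ! p i)) * (signof p * vandermonde (\<kappa> \<circ> (!) s) n))"
    by (simp add: sum_distrib_left sum_distrib_right mult_ac)
  also have "\<dots> = (\<Sum>p\<in>?P. (\<Prod>i<n. A $$ (i, restrict ((!) s \<circ> p) {..<n} i))
      * vandermonde (\<kappa> \<circ> restrict ((!) s \<circ> p) {..<n}) n)"
    by (intro sum.cong refl arg_cong2[where f = "(*)"] prod.cong) (auto simp: V_perm)
  also have "\<dots> = (\<Sum>c\<in>bijections_onto n I. (\<Prod>k<n. A $$ (k, c k)) * vandermonde (\<kappa> \<circ> c) n)"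
    using sum.reindex_bij_betw[OF bij_betw_permutes_bijections_onto[OF s_bij],
        of "\<lambda>c. (\<Prod>k<n. A $$ (k, c k)) * vandermonde (\<kappa> \<circ> c) n"] by simp
  finally show ?thesis unfolding n_def s_def .
qed

definition tau_term ::
    "real mat \<Rightarrow> (nat \<Rightarrow> real) \<Rightarrow> real \<Rightarrow> real \<Rightarrow> real \<Rightarrow> (nat \<Rightarrow> nat) \<Rightarrow> real" where
  "tau_term A \<kappa> x y t c = (\<Prod>k<dim_row A. A $$ (k, c k)) * vandermonde (\<kappa> \<circ> c) (dim_row A)
      * exp (\<Sum>k<dim_row A. xi \<kappa> (c k) x y t)"

lemma minor_times_E_fun:
  assumes I: "finite I" "card I = dim_row A"
  shows "minor A I * E_fun \<kappa> I x y t = (\<Sum>c\<in>bijections_onto (dim_row A) I. tau_term A \<kappa> x y t c)"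
proof -
  define n where "n = dim_row A"
  define s where "s = sorted_list_of_set I"
  have s_bij: "bij_betw ((!) s) {..<n} I"
    unfolding s_def n_def using bij_betw_sorted_list_of_set_nth[OF I(1)] by (simp add: I(2))
  have xi_sum: "(\<Sum>k<n. xi \<kappa> (c k) x y t) = (\<Sum>i\<in>I. xi \<kappa> i x y t)" if "bij_betw c {..<n} I" for c
    using sum.reindex_bij_betw[OF that] by simp
  have "E_fun \<kappa> I x y t = vandermonde (\<kappa> \<circ> (!) s) n * exp (\<Sum>i\<in>I. xi \<kappa> i x y t)"
    using E_fun_image[of n "(!) s"] sorted_list_of_set_nth_less[OF I(1)] I(2)
      bij_betw_imp_surj_on[OF s_bij] xi_sum[OF s_bij]
    unfolding s_def n_def by simp
  then have "minor A I * E_fun \<kappa> I x y t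
      = (minor A I * vandermonde (\<kappa> \<circ> (!) s) n) * exp (\<Sum>i\<in>I. xi \<kappa> i x y t)"
    by simp
  also have "\<dots> = (\<Sum>c\<in>bijections_onto n I. (\<Prod>k<n. A $$ (k, c k)) * vandermonde (\<kappa> \<circ> c) n)
      * exp (\<Sum>i\<in>I. xi \<kappa> i x y t)"
    using minor_times_vandermonde[OF I] unfolding s_def n_def by simp
  also have "\<dots> = (\<Sum>c\<in>bijections_onto n I. tau_term A \<kappa> x y t c)"
    unfolding sum_distrib_right tau_term_def n_def[symmetric]
    by (intro sum.cong refl) (simp add: bijections_onto_def xi_sum)
  finally show ?thesis unfolding n_def .
qed

definition injections :: "nat \<Rightarrow> nat \<Rightarrow> (nat \<Rightarrow> nat) set" where
  "injections n M = {c \<in> {..<n} \<rightarrow>\<^sub>E {..<M}. inj_on c {..<n}}"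

lemma tau_eq_sum_injections:
  "tau A \<kappa> x y t = (\<Sum>c\<in>injections (dim_row A) (dim_col A). tau_term A \<kappa> x y t c)"
proof -
  define n where "n = dim_row A"
  define M where "M = dim_col A"
  define Sets where "Sets = {I. I \<subseteq> {..<M} \<and> card I = n}"
  have "finite Sets" unfolding Sets_def by (rule finite_subset[of _ "Pow {..<M}"]) auto
  have "tau A \<kappa> x y t = (\<Sum>I\<in>Sets. \<Sum>c\<in>bijections_onto n I. tau_term A \<kappa> x y t c)"
    unfolding tau_def Sets_def n_def M_def
  proof (intro sum.cong refl minor_times_E_fun)
    fix I assume "I \<in> {I. I \<subseteq> {..<dim_col A} \<and> card I = dim_row A}"
    then show "finite I" "card I = dim_row A" using finite_subset[of I "{..<dim_col A}"] by auto
  qed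
  also have "\<dots> = (\<Sum>I\<in>Sets. \<Sum>c\<in>{c \<in> injections n M. c ` {..<n} = I}. tau_term A \<kappa> x y t c)"
  proof (intro sum.cong refl)
    fix I assume "I \<in> Sets"
    then show "bijections_onto n I = {c \<in> injections n M. c ` {..<n} = I}"
      unfolding Sets_def bijections_onto_def injections_def bij_betw_def by (auto simp: PiE_iff)
  qed
  also have "\<dots> = (\<Sum>c\<in>injections n M. tau_term A \<kappa> x y t c)"
  proof (rule sum.group[OF _ \<open>finite Sets\<close>])
    show "finite (injections n M)"
      unfolding injections_def by (rule finite_subset[OF _ finite_PiE[of "{..<n}" "\<lambda>_. {..<M}"]]) auto
    show "(\<lambda>c. c ` {..<n}) ` injections n M \<subseteq> Sets"
    proof clarify
      fix c assume "c \<in> injections n M"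
      then show "c ` {..<n} \<in> Sets"
        unfolding injections_def Sets_def by (auto simp: card_image)
    qed
  qed
  finally show ?thesis unfolding n_def M_def .
qed

lemma tau_term_eq_0_if_not_inj:
  assumes "\<not> inj_on c {..<dim_row A}"
  shows "tau_term A \<kappa> x y t c = 0"
proof -
  obtain a b where "a < dim_row A" "b < dim_row A" "a \<noteq> b" "c a = c b"
    using assms unfolding inj_on_def by auto
  then have "vandermonde (\<kappa> \<circ> c) (dim_row A) = 0" by (intro vandermonde_eq_0[of a _ b]) simp_all
  then show ?thesis unfolding tau_term_def by simp
qed

lemma bij_betw_ordered_pairs:
  fixes f :: "'a::linorder \<Rightarrow> 'b::linorder"
  assumes f: "bij_betw f S T" and mono: "\<And>a b. a \<in> S \<Longrightarrow> b \<in> S \<Longrightarrow> a < b \<Longrightarrow> f a < f b"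
  shows "bij_betw (map_prod f f) {(a, b). a < b \<and> a \<in> S \<and> b \<in> S} {(a, b). a < b \<and> a \<in> T \<and> b \<in> T}"
proof -
  have "inj_on (map_prod f f) {(a, b). a < b \<and> a \<in> S \<and> b \<in> S}"
    using f by (auto simp: bij_betw_def inj_on_def)
  moreover have "map_prod f f ` {(a, b). a < b \<and> a \<in> S \<and> b \<in> S} = {(a, b). a < b \<and> a \<in> T \<and> b \<in> T}"
  proof (intro equalityI subsetI)
    fix z assume "z \<in> map_prod f f ` {(a, b). a < b \<and> a \<in> S \<and> b \<in> S}"
    then show "z \<in> {(a, b). a < b \<and> a \<in> T \<and> b \<in> T}" using f mono by (auto simp: bij_betw_def)
  next
    fix z assume "z \<in> {(a, b). a < b \<and> a \<in> T \<and> b \<in> T}"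
    then obtain a b where z: "z = (f a, f b)" "f a < f b" "a \<in> S" "b \<in> S"
      using f by (auto simp: bij_betw_def image_iff)
    then have "a < b" using mono by (metis linorder_neqE order_less_asym order_less_irrefl)
    then show "z \<in> map_prod f f ` {(a, b). a < b \<and> a \<in> S \<and> b \<in> S}" using z by auto
  qed
  ultimately show ?thesis by (simp add: bij_betw_def)
qed

locale tnn_echelon =
  fixes A :: "real mat" and \<kappa> :: "nat \<Rightarrow> real" and piv :: "nat \<Rightarrow> nat" and N M :: nat
  assumes dim_row: "dim_row A = N" and dim_col: "dim_col A = M"
    and \<kappa>_mono: "\<And>i j. i < j \<Longrightarrow> j < M \<Longrightarrow> \<kappa> i < \<kappa> j"
    and rref: "rref_with_pivots A piv"
    and tnn: "totally_nonneg A"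
begin

lemma piv_less: "k < N \<Longrightarrow> piv k < M"
  using rref unfolding rref_with_pivots_def dim_row dim_col by blast

lemma piv_strict_mono: "k < l \<Longrightarrow> l < N \<Longrightarrow> piv k < piv l"
  using rref unfolding rref_with_pivots_def dim_row by blast

lemma piv_inj: "k < N \<Longrightarrow> l < N \<Longrightarrow> piv k = piv l \<Longrightarrow> k = l"
  by (metis linorder_neqE_nat order_less_irrefl piv_strict_mono)

lemma A_pivot: "k < N \<Longrightarrow> A $$ (k, piv k) = 1"
  using rref unfolding rref_with_pivots_def dim_row by blast

lemma A_other_pivot: "k < N \<Longrightarrow> l < N \<Longrightarrow> l \<noteq> k \<Longrightarrow> A $$ (l, piv k) = 0"
  using rref unfolding rref_with_pivots_def dim_row by blast

lemma \<kappa>_inj: "i < M \<Longrightarrow> j < M \<Longrightarrow> \<kappa> i = \<kappa> j \<Longrightarrow> i = j"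
  by (metis \<kappa>_mono linorder_neqE_nat order_less_irrefl)

lemma vandermonde_pivots_pos: "vandermonde (\<kappa> \<circ> piv) N > 0"
  by (rule vandermonde_pos) (simp add: \<kappa>_mono piv_strict_mono piv_less)

definition nonpivot_entries :: "(nat \<times> nat) set" where
  "nonpivot_entries = {(k, j). k < N \<and> j < M \<and> j \<notin> piv ` {..<N} \<and> A $$ (k, j) \<noteq> 0}"

lemma finite_nonpivot_entries: "finite nonpivot_entries"
  unfolding nonpivot_entries_def by (rule finite_subset[of _ "{..<N} \<times> {..<M}"]) auto

lemma nonpivot_entriesD: "(k, j) \<in> nonpivot_entries \<Longrightarrow> k < N \<and> j < M \<and> A $$ (k, j) \<noteq> 0"
  unfolding nonpivot_entries_def by auto

lemma entry_not_pivot: "(k, j) \<in> nonpivot_entries \<Longrightarrow> l < N \<Longrightarrow> j \<noteq> piv l"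
  unfolding nonpivot_entries_def by auto

lemma \<kappa>_pivot_inj: "a < N \<Longrightarrow> b < N \<Longrightarrow> \<kappa> (piv a) = \<kappa> (piv b) \<Longrightarrow> a = b"
  by (metis \<kappa>_inj piv_less piv_inj)

lemma \<kappa>_entry_ne_pivot: "(k, j) \<in> nonpivot_entries \<Longrightarrow> l < N \<Longrightarrow> \<kappa> (piv l) \<noteq> \<kappa> j"
  by (metis nonpivot_entriesD entry_not_pivot \<kappa>_inj piv_less)

definition admissible :: "(nat \<Rightarrow> nat) set" where
  "admissible = {c \<in> {..<N} \<rightarrow>\<^sub>E {..<M}. \<forall>k<N. c k = piv k \<or> (k, c k) \<in> nonpivot_entries}"

lemma tau_eq_sum_admissible: "tau A \<kappa> x y t = (\<Sum>c\<in>admissible. tau_term A \<kappa> x y t c)"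
proof -
  let ?All = "{..<N} \<rightarrow>\<^sub>E {..<M}"
  have fin: "finite ?All" by (rule finite_PiE) auto
  have "tau A \<kappa> x y t = (\<Sum>c\<in>?All. tau_term A \<kappa> x y t c)"
    unfolding tau_eq_sum_injections dim_row dim_col
    by (rule sum.mono_neutral_left[OF fin])
      (auto simp: injections_def dim_row[symmetric] intro: tau_term_eq_0_if_not_inj)
  also have "\<dots> = (\<Sum>c\<in>admissible. tau_term A \<kappa> x y t c)"
  proof (rule sum.mono_neutral_right[OF fin])
    show "admissible \<subseteq> ?All" unfolding admissible_def by auto
    show "\<forall>c\<in>?All - admissible. tau_term A \<kappa> x y t c = 0"
    proof
      fix c assume c: "c \<in> ?All - admissible"
      then obtain k where k: "k < N" "c k \<noteq> piv k" "(k, c k) \<notin> nonpivot_entries"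
        unfolding admissible_def by auto
      have "A $$ (k, c k) = 0"
      proof (cases "c k \<in> piv ` {..<N}")
        case True
        then obtain l where "l < N" "c k = piv l" by auto
        then show ?thesis using A_other_pivot[of l k] k by auto
      next
        case False
        then show ?thesis using k c unfolding nonpivot_entries_def by auto
      qed
      then have "(\<Prod>k<N. A $$ (k, c k)) = 0" using k(1) by (intro prod_zero) auto
      then show "tau_term A \<kappa> x y t c = 0" unfolding tau_term_def dim_row by simp
    qed
  qed
  finally show ?thesis .
qed

definition replaced_pivots :: "nat \<Rightarrow> nat \<Rightarrow> nat set" where
  "replaced_pivots k j = insert j (piv ` ({..<N} - {k}))"

definition replacement_factor :: "nat \<Rightarrow> nat \<Rightarrow> real" where
  "replacement_factor k j = (\<Prod>l\<in>{..<N} - {k}. (\<kappa> (piv l) - \<kappa> j) / (\<kappa> (piv l) - \<kappa> (piv k)))"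

lemma replaced_pivots_subset: "(k, j) \<in> nonpivot_entries \<Longrightarrow> replaced_pivots k j \<subseteq> {..<M}"
  using nonpivot_entriesD piv_less by (auto simp: replaced_pivots_def)

lemma finite_replaced_pivots: "finite (replaced_pivots k j)"
  by (simp add: replaced_pivots_def)

lemma card_replaced_pivots:
  assumes "(k, j) \<in> nonpivot_entries"
  shows "card (replaced_pivots k j) = N"
proof -
  have "inj_on piv ({..<N} - {k})" by (rule inj_onI) (auto intro: piv_inj)
  moreover have "j \<notin> piv ` ({..<N} - {k})" using entry_not_pivot[OF assms] by auto
  ultimately show ?thesis using nonpivot_entriesD[OF assms] by (simp add: replaced_pivots_def card_image)
qed

lemma bijections_onto_replaced_pivots_nonzero:
  assumes kj: "(k, j) \<in> nonpivot_entries"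
    and c: "c \<in> bijections_onto N (replaced_pivots k j)"
    and nz: "(\<Prod>l<N. A $$ (l, c l)) \<noteq> 0"
  shows "c = restrict (piv(k := j)) {..<N}"
proof
  fix l
  have k: "k < N" using nonpivot_entriesD[OF kj] by simp
  have c_in: "\<And>l. l < N \<Longrightarrow> c l \<in> replaced_pivots k j" and c_inj: "inj_on c {..<N}"
    using c unfolding bijections_onto_def bij_betw_def by auto
  have rows: "c l = j \<or> (l \<noteq> k \<and> c l = piv l)" if l: "l < N" for l
  proof (cases "c l = j")
    case False
    then obtain m where m: "m < N" "m \<noteq> k" "c l = piv m"
      using c_in[OF l] unfolding replaced_pivots_def by auto
    have "A $$ (l, c l) \<noteq> 0" using nz l by (auto simp: prod_zero_iff)
    then have "m = l" using A_other_pivot[OF m(1) l] m by auto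
    then show ?thesis using m by simp
  qed simp
  show "c l = restrict (piv(k := j)) {..<N} l"
  proof (cases "l < N")
    case True
    have "c k = j" using rows[OF k] by simp
    moreover have "l \<noteq> k \<Longrightarrow> c l \<noteq> j"
      using c_inj \<open>c k = j\<close> True k unfolding inj_on_def by (metis lessThan_iff)
    ultimately show ?thesis using rows[OF True] True by auto
  next
    case False
    then show ?thesis using c unfolding bijections_onto_def by (auto simp: PiE_def extensional_def)
  qed
qed

lemma minor_replaced_pivots:
  assumes kj: "(k, j) \<in> nonpivot_entries"
  shows "minor A (replaced_pivots k j) * vandermonde (\<kappa> \<circ> (!) (sorted_list_of_set (replaced_pivots k j))) N
    = A $$ (k, j) * vandermonde (\<kappa> \<circ> piv(k := j)) N"
proof -
  let ?I = "replaced_pivots k j"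
  let ?c0 = "restrict (piv(k := j)) {..<N}"
  let ?f = "\<lambda>c. (\<Prod>l<N. A $$ (l, c l)) * vandermonde (\<kappa> \<circ> c) N"
  have k: "k < N" using nonpivot_entriesD[OF kj] by simp
  have c0: "?c0 \<in> bijections_onto N ?I"
  proof -
    have "inj_on ?c0 {..<N}"
      by (rule inj_onI) (auto simp: entry_not_pivot[OF kj] piv_inj split: if_splits)
    moreover have "?c0 ` {..<N} = ?I"
      using k unfolding replaced_pivots_def by (auto simp: image_iff)
    ultimately show ?thesis
      unfolding bijections_onto_def bij_betw_def using k by (auto simp: replaced_pivots_def)
  qed
  have fin: "finite (bijections_onto N ?I)"
    unfolding bijections_onto_def using finite_replaced_pivots
    by (intro finite_subset[OF _ finite_PiE[of "{..<N}" "\<lambda>_. ?I"]]) auto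
  have "minor A ?I * vandermonde (\<kappa> \<circ> (!) (sorted_list_of_set ?I)) N
      = (\<Sum>c\<in>bijections_onto N ?I. ?f c)"
    using minor_times_vandermonde[of ?I A \<kappa>] finite_replaced_pivots card_replaced_pivots[OF kj]
    by (simp add: dim_row)
  also have "\<dots> = ?f ?c0 + (\<Sum>c\<in>bijections_onto N ?I - {?c0}. ?f c)"
    by (rule sum.remove[OF fin c0])
  also have "(\<Sum>c\<in>bijections_onto N ?I - {?c0}. ?f c) = 0"
    using bijections_onto_replaced_pivots_nonzero[OF kj] by (intro sum.neutral) auto
  also have "(\<Prod>l<N. A $$ (l, ?c0 l)) = A $$ (k, j)"
  proof -
    have "(\<Prod>l<N. A $$ (l, ?c0 l)) = (\<Prod>l\<in>{k}. A $$ (l, ?c0 l))"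
      by (rule prod.mono_neutral_right) (use k in \<open>auto simp: A_pivot\<close>)
    then show ?thesis using k by simp
  qed
  also have "vandermonde (\<kappa> \<circ> ?c0) N = vandermonde (\<kappa> \<circ> piv(k := j)) N"
    by (rule vandermonde_cong) simp
  finally show ?thesis by (simp only: add_0_right)
qed

lemma vandermonde_replaced_pivot:
  assumes kj: "(k, j) \<in> nonpivot_entries"
  shows "vandermonde (\<kappa> \<circ> piv(k := j)) N = vandermonde (\<kappa> \<circ> piv) N * replacement_factor k j"
proof -
  have k: "k < N" using nonpivot_entriesD[OF kj] by simp
  have "vandermonde (\<kappa> \<circ> piv(k := j)) N = vandermonde (\<kappa> \<circ> piv) N
      * (\<Prod>k'\<in>{k}. \<Prod>l\<in>{..<N} - {k'}. ((\<kappa> \<circ> piv) l - (\<kappa> \<circ> piv(k := j)) k') / ((\<kappa> \<circ> piv) l - (\<kappa> \<circ> piv) k'))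
      * (\<Prod>(a, b)\<in>strict_pairs N \<inter> {k} \<times> {k}. cross_ratio (\<kappa> \<circ> piv) (\<kappa> \<circ> piv(k := j)) a b)"
  proof (rule vandermonde_ratio)
    show "\<And>a b. a < N \<Longrightarrow> b < N \<Longrightarrow> a \<noteq> b \<Longrightarrow> (\<kappa> \<circ> piv) a \<noteq> (\<kappa> \<circ> piv) b"
      using \<kappa>_pivot_inj by auto
    show "\<And>a b. a < N \<Longrightarrow> b < N \<Longrightarrow> a \<noteq> b \<Longrightarrow> b \<in> {k} \<Longrightarrow> (\<kappa> \<circ> piv) a \<noteq> (\<kappa> \<circ> piv(k := j)) b"
      using \<kappa>_entry_ne_pivot[OF kj] by auto
  qed (use k in auto)
  moreover have "strict_pairs N \<inter> {k} \<times> {k} = {}" unfolding strict_pairs_def by auto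
  ultimately show ?thesis by (simp add: replacement_factor_def)
qed

text \<open>This is where total nonnegativity enters: up to positive Vandermonde factors the product
  is the minor on the pivot columns with the k-th pivot replaced by j.\<close>

lemma entry_replacement_factor_pos:
  assumes kj: "(k, j) \<in> nonpivot_entries"
  shows "A $$ (k, j) * replacement_factor k j > 0"
proof -
  let ?I = "replaced_pivots k j"
  note I = finite_replaced_pivots[of k j] card_replaced_pivots[OF kj] replaced_pivots_subset[OF kj]
  have "minor A ?I \<ge> 0"
    using tnn I unfolding totally_nonneg_def dim_row dim_col by blast
  moreover have "vandermonde (\<kappa> \<circ> (!) (sorted_list_of_set ?I)) N > 0"
  proof (rule vandermonde_pos)
    fix a b assume ab: "a < b" "b < N"
    then have "sorted_list_of_set ?I ! b \<in> ?I"
      using I by (metis length_sorted_list_of_set nth_mem set_sorted_list_of_set)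
    then show "(\<kappa> \<circ> (!) (sorted_list_of_set ?I)) a < (\<kappa> \<circ> (!) (sorted_list_of_set ?I)) b"
      using ab I sorted_list_of_set_nth_less[of ?I a b] \<kappa>_mono by auto
  qed
  ultimately have "A $$ (k, j) * vandermonde (\<kappa> \<circ> piv(k := j)) N \<ge> 0"
    unfolding minor_replaced_pivots[OF kj, symmetric] by simp
  then have "(A $$ (k, j) * replacement_factor k j) * vandermonde (\<kappa> \<circ> piv) N \<ge> 0"
    unfolding vandermonde_replaced_pivot[OF kj] by (simp add: mult_ac)
  then have "A $$ (k, j) * replacement_factor k j \<ge> 0"
    using vandermonde_pivots_pos by (simp add: zero_le_mult_iff)
  moreover have "replacement_factor k j \<noteq> 0"
    using \<kappa>_entry_ne_pivot[OF kj] \<kappa>_pivot_inj nonpivot_entriesD[OF kj]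
    unfolding replacement_factor_def by (auto simp: prod_zero_iff)
  ultimately show ?thesis using nonpivot_entriesD[OF kj] by (simp add: less_le)
qed

abbreviation nz :: "(nat \<times> nat) list" where "nz \<equiv> nz_entries A piv"
abbreviation g :: nat where "g \<equiv> gtilde A piv"

lemma nz_entries_eq: "nz = sorted_list_of_set nonpivot_entries"
  unfolding nz_entries_def nonpivot_entries_def dim_row dim_col by simp

lemma nz_in_nonpivot_entries: "\<sigma> < g \<Longrightarrow> nz ! \<sigma> \<in> nonpivot_entries"
  using nth_mem[of \<sigma> nz] finite_nonpivot_entries by (simp add: gtilde_def nz_entries_eq)

lemma nz_index:
  assumes "e \<in> nonpivot_entries"
  shows "\<exists>\<sigma><g. nz ! \<sigma> = e"
proof -
  have "e \<in> set nz" using assms finite_nonpivot_entries by (simp add: nz_entries_eq)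
  then show ?thesis unfolding gtilde_def in_set_conv_nth .
qed

lemma nz_inj: "\<sigma> < g \<Longrightarrow> \<rho> < g \<Longrightarrow> nz ! \<sigma> = nz ! \<rho> \<Longrightarrow> \<sigma> = \<rho>"
  by (simp add: gtilde_def nz_entries_eq nth_eq_iff_index_eq)

lemma nz_strict_mono: "\<sigma> < \<rho> \<Longrightarrow> \<rho> < g \<Longrightarrow> nz ! \<sigma> < nz ! \<rho>"
  using sorted_wrt_nth_less[OF sorted_list_of_set.strict_sorted_key_list_of_set]
  by (simp add: gtilde_def nz_entries_eq)

lemma C_coef_same_row: "fst (nz ! \<sigma>) = fst (nz ! \<rho>) \<Longrightarrow> C_coef A piv \<kappa> \<sigma> \<rho> = 0"
  unfolding C_coef_def b_par_def by simp

lemma C_coef_eq_cross_ratio: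
  "nz ! \<sigma> = (a, c a) \<Longrightarrow> nz ! \<rho> = (b, c b)
    \<Longrightarrow> C_coef A piv \<kappa> \<sigma> \<rho> = cross_ratio (\<kappa> \<circ> piv) (\<kappa> \<circ> c) a b"
  unfolding C_coef_def b_par_def c_par_def cross_ratio_def by simp

definition coupling :: "(nat \<Rightarrow> nat) \<Rightarrow> real" where
  "coupling m = (\<Prod>\<sigma><g. \<Prod>\<rho>\<in>{\<sigma><..<g}. C_coef A piv \<kappa> \<sigma> \<rho> ^ (m \<sigma> * m \<rho>))"

definition theta_term :: "real \<Rightarrow> real \<Rightarrow> real \<Rightarrow> (nat \<Rightarrow> nat) \<Rightarrow> real" where
  "theta_term x y t m = coupling m * exp (\<Sum>\<sigma><g. real (m \<sigma>) * phi_tilde A piv \<kappa> \<sigma> x y t)"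

definition one_mark_per_row :: "(nat \<Rightarrow> nat) \<Rightarrow> bool" where
  "one_mark_per_row m \<longleftrightarrow>
     (\<forall>\<sigma><g. \<forall>\<rho><g. m \<sigma> = 1 \<longrightarrow> m \<rho> = 1 \<longrightarrow> fst (nz ! \<sigma>) = fst (nz ! \<rho>) \<longrightarrow> \<sigma> = \<rho>)"

lemma one_mark_per_rowD:
  "one_mark_per_row m \<Longrightarrow> \<sigma> < g \<Longrightarrow> \<rho> < g \<Longrightarrow> m \<sigma> = 1 \<Longrightarrow> m \<rho> = 1
    \<Longrightarrow> fst (nz ! \<sigma>) = fst (nz ! \<rho>) \<Longrightarrow> \<sigma> = \<rho>"
  unfolding one_mark_per_row_def by blast

lemma coupling_eq_0_unless_one_mark_per_row:
  assumes "\<not> one_mark_per_row m"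
  shows "coupling m = 0"
proof -
  obtain \<sigma> \<rho> where "\<sigma> < g" "\<rho> < g" "\<sigma> \<noteq> \<rho>" "m \<sigma> = 1" "m \<rho> = 1" "fst (nz ! \<sigma>) = fst (nz ! \<rho>)"
    using assms unfolding one_mark_per_row_def by blast
  moreover define a b where "a = min \<sigma> \<rho>" and "b = max \<sigma> \<rho>"
  ultimately have ab: "a < b" "b < g" "m a = 1" "m b = 1" "C_coef A piv \<kappa> a b = 0"
    using C_coef_same_row by (auto simp: min_def max_def)
  then have "\<exists>\<rho>\<in>{a<..<g}. C_coef A piv \<kappa> a \<rho> ^ (m a * m \<rho>) = 0" by (intro bexI[of _ b]) simp_all
  then have "(\<Prod>\<rho>\<in>{a<..<g}. C_coef A piv \<kappa> a \<rho> ^ (m a * m \<rho>)) = 0"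
    by (rule prod_zero[rotated]) simp
  then have "\<exists>\<sigma>\<in>{..<g}. (\<Prod>\<rho>\<in>{\<sigma><..<g}. C_coef A piv \<kappa> \<sigma> \<rho> ^ (m \<sigma> * m \<rho>)) = 0"
    using ab by (intro bexI[of _ a]) simp_all
  then show ?thesis unfolding coupling_def by (rule prod_zero[rotated]) simp
qed

text \<open>A column choice c marks the entries (k, c k) it uses; this identifies the admissible
  choices with the 0/1 vectors of the theta sum that have one mark per row.\<close>

definition marked :: "(nat \<Rightarrow> nat) \<Rightarrow> nat set" where
  "marked c = {\<sigma>. \<sigma> < g \<and> c (fst (nz ! \<sigma>)) = snd (nz ! \<sigma>)}"

definition marks :: "(nat \<Rightarrow> nat) \<Rightarrow> nat \<Rightarrow> nat" where
  "marks c = restrict (\<lambda>\<sigma>. if \<sigma> \<in> marked c then 1 else 0) {..<g}"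

lemma marks_PiE: "marks c \<in> {..<g} \<rightarrow>\<^sub>E {0, 1}"
  unfolding marks_def by auto

lemma marks_eq_1: "\<sigma> < g \<Longrightarrow> marks c \<sigma> = 1 \<longleftrightarrow> \<sigma> \<in> marked c"
  unfolding marks_def by simp

lemma markedI: "\<sigma> < g \<Longrightarrow> nz ! \<sigma> = (k, c k) \<Longrightarrow> \<sigma> \<in> marked c"
  unfolding marked_def by simp

lemma markedE:
  assumes "\<sigma> \<in> marked c"
  obtains k where "\<sigma> < g" "nz ! \<sigma> = (k, c k)"
  using assms unfolding marked_def by (cases "nz ! \<sigma>") auto

lemma inj_on_marks: "inj_on marks admissible"
proof (rule inj_onI)
  fix c c' assume c: "c \<in> admissible" and c': "c' \<in> admissible" and eq: "marks c = marks c'"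
  have same: "d k = d' k"
    if "d \<in> admissible" "marks d = marks d'" "k < N" "d k \<noteq> piv k" for d d' k
  proof -
    have "(k, d k) \<in> nonpivot_entries" using that unfolding admissible_def by auto
    then obtain \<sigma> where \<sigma>: "\<sigma> < g" "nz ! \<sigma> = (k, d k)" using nz_index by blast
    then have "\<sigma> \<in> marked d" by (rule markedI)
    then have "\<sigma> \<in> marked d'"
      using that(2) marks_eq_1[OF \<open>\<sigma> < g\<close>, of d] marks_eq_1[OF \<open>\<sigma> < g\<close>, of d'] by simp
    then show ?thesis using \<sigma> unfolding marked_def by simp
  qed
  show "c = c'"
  proof
    fix k show "c k = c' k"
    proof (cases "k < N")
      case True
      then show ?thesis using same[OF c eq True] same[OF c' eq[symmetric] True] by metis
    next
      case False
      then show ?thesis using c c' unfolding admissible_def by (auto simp: PiE_def extensional_def)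
    qed
  qed
qed

definition choice_of_marks :: "(nat \<Rightarrow> nat) \<Rightarrow> nat \<Rightarrow> nat" where
  "choice_of_marks m = restrict (\<lambda>k. if \<exists>\<sigma><g. m \<sigma> = 1 \<and> fst (nz ! \<sigma>) = k
      then snd (nz ! (THE \<sigma>. \<sigma> < g \<and> m \<sigma> = 1 \<and> fst (nz ! \<sigma>) = k)) else piv k) {..<N}"

lemma choice_of_marks_marked:
  assumes one: "one_mark_per_row m" and \<sigma>: "\<sigma> < g" "m \<sigma> = 1"
  shows "choice_of_marks m (fst (nz ! \<sigma>)) = snd (nz ! \<sigma>)"
proof -
  have "(THE \<rho>. \<rho> < g \<and> m \<rho> = 1 \<and> fst (nz ! \<rho>) = fst (nz ! \<sigma>)) = \<sigma>"
  proof (rule the_equality)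
    fix \<rho> assume "\<rho> < g \<and> m \<rho> = 1 \<and> fst (nz ! \<rho>) = fst (nz ! \<sigma>)"
    then show "\<rho> = \<sigma>" using one_mark_per_rowD[OF one, of \<rho> \<sigma>] \<sigma> by simp
  qed (use \<sigma> in simp)
  moreover have "\<exists>\<rho><g. m \<rho> = 1 \<and> fst (nz ! \<rho>) = fst (nz ! \<sigma>)" using \<sigma> by blast
  moreover have "fst (nz ! \<sigma>) < N"
    using nz_in_nonpivot_entries[OF \<sigma>(1)] nonpivot_entriesD[of "fst (nz ! \<sigma>)" "snd (nz ! \<sigma>)"] by simp
  ultimately show ?thesis unfolding choice_of_marks_def by simp
qed

lemma choice_of_marks_unmarked:
  "k < N \<Longrightarrow> \<not> (\<exists>\<sigma><g. m \<sigma> = 1 \<and> fst (nz ! \<sigma>) = k) \<Longrightarrow> choice_of_marks m k = piv k"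
  unfolding choice_of_marks_def by auto

lemma choice_of_marks_admissible:
  assumes one: "one_mark_per_row m"
  shows "choice_of_marks m \<in> admissible"
proof -
  have row: "choice_of_marks m k = piv k \<or> (k, choice_of_marks m k) \<in> nonpivot_entries" if k: "k < N" for k
  proof (cases "\<exists>\<sigma><g. m \<sigma> = 1 \<and> fst (nz ! \<sigma>) = k")
    case True
    then obtain \<sigma> where \<sigma>: "\<sigma> < g" "m \<sigma> = 1" "fst (nz ! \<sigma>) = k" by blast
    then have "nz ! \<sigma> = (k, choice_of_marks m k)"
      using choice_of_marks_marked[OF one \<sigma>(1,2)] by (simp add: prod_eq_iff)
    then show ?thesis using nz_in_nonpivot_entries[OF \<sigma>(1)] by simp
  qed (simp add: choice_of_marks_unmarked k)
  have "choice_of_marks m k < M" if "k < N" for k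
    using row[OF that] that by (auto dest: nonpivot_entriesD simp: piv_less)
  moreover have "choice_of_marks m \<in> extensional {..<N}" unfolding choice_of_marks_def by simp
  ultimately show ?thesis using row unfolding admissible_def by (auto simp: PiE_iff)
qed

lemma marks_choice_of_marks:
  assumes m: "m \<in> {..<g} \<rightarrow>\<^sub>E {0, 1}" and one: "one_mark_per_row m"
  shows "marks (choice_of_marks m) = m"
proof
  fix \<sigma>
  show "marks (choice_of_marks m) \<sigma> = m \<sigma>"
  proof (cases "\<sigma> < g")
    case False
    then show ?thesis using m unfolding marks_def by (auto simp: PiE_def extensional_def)
  next
    case \<sigma>: True
    obtain k j where e: "nz ! \<sigma> = (k, j)" by (cases "nz ! \<sigma>")
    have kj: "(k, j) \<in> nonpivot_entries" using nz_in_nonpivot_entries[OF \<sigma>] e by simp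
    then have k: "k < N" by (simp add: nonpivot_entriesD)
    have "choice_of_marks m k = j \<longleftrightarrow> m \<sigma> = 1"
    proof
      assume "m \<sigma> = 1"
      then show "choice_of_marks m k = j" using choice_of_marks_marked[OF one \<sigma>] e by simp
    next
      assume chosen: "choice_of_marks m k = j"
      show "m \<sigma> = 1"
      proof (cases "\<exists>\<rho><g. m \<rho> = 1 \<and> fst (nz ! \<rho>) = k")
        case True
        then obtain \<rho> where \<rho>: "\<rho> < g" "m \<rho> = 1" "fst (nz ! \<rho>) = k" by blast
        then have "nz ! \<rho> = (k, j)"
          using choice_of_marks_marked[OF one \<rho>(1,2)] chosen by (simp add: prod_eq_iff)
        then have "\<rho> = \<sigma>" using nz_inj[OF \<rho>(1) \<sigma>] e by simp
        then show ?thesis using \<rho>(2) by simp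
      next
        case False
        then show ?thesis using choice_of_marks_unmarked[OF k False] chosen entry_not_pivot[OF kj k] by simp
      qed
    qed
    moreover have "m \<sigma> \<in> {0, 1}" using m \<sigma> by auto
    ultimately show ?thesis using \<sigma> e unfolding marks_def marked_def by auto
  qed
qed

lemma theta_tilde_eq_sum_admissible:
  "theta_tilde A piv \<kappa> x y t = (\<Sum>c\<in>admissible. theta_term x y t (marks c))"
proof -
  have "theta_tilde A piv \<kappa> x y t = (\<Sum>m\<in>{..<g} \<rightarrow>\<^sub>E {0, 1}. theta_term x y t m)"
    unfolding theta_tilde_def theta_term_def coupling_def Let_def by (rule refl)
  also have "\<dots> = (\<Sum>m\<in>marks ` admissible. theta_term x y t m)"
  proof (rule sum.mono_neutral_right)
    show "finite ({..<g} \<rightarrow>\<^sub>E {0::nat, 1})" by (rule finite_PiE) auto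
    show "marks ` admissible \<subseteq> {..<g} \<rightarrow>\<^sub>E {0, 1}" by (rule image_subsetI) (rule marks_PiE)
    show "\<forall>m\<in>({..<g} \<rightarrow>\<^sub>E {0, 1}) - marks ` admissible. theta_term x y t m = 0"
    proof
      fix m assume m: "m \<in> ({..<g} \<rightarrow>\<^sub>E {0, 1}) - marks ` admissible"
      have "\<not> one_mark_per_row m"
      proof
        assume one: "one_mark_per_row m"
        have "m = marks (choice_of_marks m)" using marks_choice_of_marks[OF _ one] m by simp
        then have "m \<in> marks ` admissible" using choice_of_marks_admissible[OF one] by (rule image_eqI)
        then show False using m by simp
      qed
      then have "coupling m = 0" by (rule coupling_eq_0_unless_one_mark_per_row)
      then show "theta_term x y t m = 0" by (simp add: theta_term_def)
    qed
  qed
  also have "\<dots> = (\<Sum>c\<in>admissible. theta_term x y t (marks c))"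
    by (rule sum.reindex[OF inj_on_marks, unfolded comp_def])
  finally show ?thesis .
qed

definition changed_rows :: "(nat \<Rightarrow> nat) \<Rightarrow> nat set" where
  "changed_rows c = {k. k < N \<and> c k \<noteq> piv k}"

lemma bij_betw_marked_changed_rows:
  assumes c: "c \<in> admissible"
  shows "bij_betw (\<lambda>\<sigma>. fst (nz ! \<sigma>)) (marked c) (changed_rows c)"
proof (rule bij_betw_imageI)
  show "inj_on (\<lambda>\<sigma>. fst (nz ! \<sigma>)) (marked c)"
  proof (rule inj_onI)
    fix \<sigma> \<rho>
    assume \<sigma>: "\<sigma> \<in> marked c" and \<rho>: "\<rho> \<in> marked c" and rows: "fst (nz ! \<sigma>) = fst (nz ! \<rho>)"
    obtain k where "\<sigma> < g" "nz ! \<sigma> = (k, c k)" using \<sigma> by (rule markedE)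
    moreover obtain l where "\<rho> < g" "nz ! \<rho> = (l, c l)" using \<rho> by (rule markedE)
    ultimately show "\<sigma> = \<rho>" using rows by (intro nz_inj) simp_all
  qed
  show "(\<lambda>\<sigma>. fst (nz ! \<sigma>)) ` marked c = changed_rows c"
  proof (intro equalityI subsetI)
    fix k assume "k \<in> (\<lambda>\<sigma>. fst (nz ! \<sigma>)) ` marked c"
    then obtain \<sigma> where \<sigma>: "\<sigma> \<in> marked c" and k: "k = fst (nz ! \<sigma>)" by auto
    obtain l where "\<sigma> < g" "nz ! \<sigma> = (l, c l)" using \<sigma> by (rule markedE)
    then have "(k, c k) \<in> nonpivot_entries" using nz_in_nonpivot_entries[OF \<open>\<sigma> < g\<close>] k by simp
    then show "k \<in> changed_rows c" unfolding changed_rows_def using nonpivot_entriesD entry_not_pivot by blast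
  next
    fix k assume "k \<in> changed_rows c"
    then have "(k, c k) \<in> nonpivot_entries" using c unfolding changed_rows_def admissible_def by auto
    then obtain \<sigma> where "\<sigma> < g" "nz ! \<sigma> = (k, c k)" using nz_index by blast
    then show "k \<in> (\<lambda>\<sigma>. fst (nz ! \<sigma>)) ` marked c" by (intro image_eqI[where x = \<sigma>] markedI) simp_all
  qed
qed

lemma phi_tilde_entry:
  assumes e: "nz ! \<sigma> = (k, j)" and kj: "(k, j) \<in> nonpivot_entries"
  shows "phi_tilde A piv \<kappa> \<sigma> x y t = xi \<kappa> j x y t - xi \<kappa> (piv k) x y t + ln (A $$ (k, j) * replacement_factor k j)"
proof -
  have "\<bar>A $$ (k, j)\<bar> * (\<Prod>l\<in>{..<N} - {k}. \<bar>\<kappa> (piv l) - \<kappa> j\<bar>) / (\<Prod>l\<in>{..<N} - {k}. \<bar>\<kappa> (piv l) - \<kappa> (piv k)\<bar>)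
      = \<bar>A $$ (k, j) * replacement_factor k j\<bar>"
    unfolding replacement_factor_def by (simp add: abs_mult abs_prod abs_divide prod_dividef)
  also have "\<dots> = A $$ (k, j) * replacement_factor k j"
    using entry_replacement_factor_pos[OF kj] by simp
  finally show ?thesis unfolding phi_tilde_def phi0_def e dim_row by simp
qed

lemma exp_marks_phi_tilde:
  assumes c: "c \<in> admissible"
  shows "exp (\<Sum>\<sigma><g. real (marks c \<sigma>) * phi_tilde A piv \<kappa> \<sigma> x y t)
    = (\<Prod>k\<in>changed_rows c. exp (xi \<kappa> (c k) x y t - xi \<kappa> (piv k) x y t) * (A $$ (k, c k) * replacement_factor k (c k)))"
proof -
  let ?F = "\<lambda>k. exp (xi \<kappa> (c k) x y t - xi \<kappa> (piv k) x y t) * (A $$ (k, c k) * replacement_factor k (c k))"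
  have "exp (\<Sum>\<sigma><g. real (marks c \<sigma>) * phi_tilde A piv \<kappa> \<sigma> x y t)
      = (\<Prod>\<sigma><g. exp (real (marks c \<sigma>) * phi_tilde A piv \<kappa> \<sigma> x y t))"
    by (simp add: exp_sum)
  also have "\<dots> = (\<Prod>\<sigma>\<in>marked c. exp (phi_tilde A piv \<kappa> \<sigma> x y t))"
    by (rule prod.mono_neutral_cong_right) (auto simp: marks_def marked_def)
  also have "\<dots> = (\<Prod>\<sigma>\<in>marked c. ?F (fst (nz ! \<sigma>)))"
  proof (rule prod.cong[OF refl])
    fix \<sigma> assume "\<sigma> \<in> marked c"
    then obtain k where "\<sigma> < g" and e: "nz ! \<sigma> = (k, c k)" by (rule markedE)
    then have kj: "(k, c k) \<in> nonpivot_entries" using nz_in_nonpivot_entries[OF \<open>\<sigma> < g\<close>] by simp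
    show "exp (phi_tilde A piv \<kappa> \<sigma> x y t) = ?F (fst (nz ! \<sigma>))"
      using phi_tilde_entry[OF e kj] entry_replacement_factor_pos[OF kj] by (simp add: e exp_add)
  qed
  also have "\<dots> = (\<Prod>k\<in>changed_rows c. ?F k)"
    using prod.reindex_bij_betw[OF bij_betw_marked_changed_rows[OF c]] by simp
  finally show ?thesis .
qed

lemma marked_rows_less:
  assumes "\<sigma> \<in> marked c" "\<rho> \<in> marked c" "\<sigma> < \<rho>"
  shows "fst (nz ! \<sigma>) < fst (nz ! \<rho>)"
proof -
  obtain k l where "\<sigma> < g" "\<rho> < g" and e: "nz ! \<sigma> = (k, c k)" "nz ! \<rho> = (l, c l)"
    using assms(1,2) by (elim markedE)
  then have "nz ! \<sigma> < nz ! \<rho>" "nz ! \<sigma> \<noteq> nz ! \<rho>"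
    using nz_strict_mono[OF assms(3) \<open>\<rho> < g\<close>] nz_inj[OF \<open>\<sigma> < g\<close> \<open>\<rho> < g\<close>] assms(3) by auto
  then show ?thesis unfolding e by (auto simp: prod_less_eq)
qed

lemma coupling_marks:
  assumes c: "c \<in> admissible"
  shows "coupling (marks c)
    = (\<Prod>(a, b)\<in>strict_pairs N \<inter> changed_rows c \<times> changed_rows c. cross_ratio (\<kappa> \<circ> piv) (\<kappa> \<circ> c) a b)"
proof -
  let ?row = "\<lambda>\<sigma>. fst (nz ! \<sigma>)"
  define Q where "Q = {(\<sigma>, \<rho>). \<sigma> < \<rho> \<and> \<sigma> \<in> marked c \<and> \<rho> \<in> marked c}"
  have "coupling (marks c) = (\<Prod>z\<in>Sigma {..<g} (\<lambda>\<sigma>. {\<sigma><..<g}).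
      C_coef A piv \<kappa> (fst z) (snd z) ^ (marks c (fst z) * marks c (snd z)))"
    unfolding coupling_def by (subst prod.Sigma) (auto simp: case_prod_beta')
  also have "\<dots> = (\<Prod>z\<in>Q. C_coef A piv \<kappa> (fst z) (snd z))"
    by (rule prod.mono_neutral_cong_right) (auto simp: Q_def marks_def marked_def)
  also have "\<dots> = (\<Prod>z\<in>Q. cross_ratio (\<kappa> \<circ> piv) (\<kappa> \<circ> c) (?row (fst z)) (?row (snd z)))"
  proof (rule prod.cong[OF refl])
    fix z assume "z \<in> Q"
    then have "fst z \<in> marked c" "snd z \<in> marked c" unfolding Q_def by auto
    obtain k where k: "nz ! fst z = (k, c k)" using \<open>fst z \<in> marked c\<close> by (rule markedE)
    obtain l where l: "nz ! snd z = (l, c l)" using \<open>snd z \<in> marked c\<close> by (rule markedE)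
    show "C_coef A piv \<kappa> (fst z) (snd z) = cross_ratio (\<kappa> \<circ> piv) (\<kappa> \<circ> c) (?row (fst z)) (?row (snd z))"
      using C_coef_eq_cross_ratio[OF k l] k l by simp
  qed
  also have "\<dots> = (\<Prod>z\<in>Q. (\<lambda>(a, b). cross_ratio (\<kappa> \<circ> piv) (\<kappa> \<circ> c) a b) (map_prod ?row ?row z))"
    by (simp add: case_prod_beta)
  also have "\<dots> = (\<Prod>(a, b)\<in>{(a, b). a < b \<and> a \<in> changed_rows c \<and> b \<in> changed_rows c}.
      cross_ratio (\<kappa> \<circ> piv) (\<kappa> \<circ> c) a b)"
    unfolding Q_def using bij_betw_ordered_pairs[OF bij_betw_marked_changed_rows[OF c] marked_rows_less]
    by (rule prod.reindex_bij_betw)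
  also have "{(a, b). a < b \<and> a \<in> changed_rows c \<and> b \<in> changed_rows c}
      = strict_pairs N \<inter> changed_rows c \<times> changed_rows c"
    unfolding strict_pairs_def changed_rows_def by auto
  finally show ?thesis .
qed

lemma vandermonde_admissible:
  assumes c: "c \<in> admissible"
  shows "vandermonde (\<kappa> \<circ> c) N = vandermonde (\<kappa> \<circ> piv) N
    * (\<Prod>k\<in>changed_rows c. replacement_factor k (c k))
    * (\<Prod>(a, b)\<in>strict_pairs N \<inter> changed_rows c \<times> changed_rows c. cross_ratio (\<kappa> \<circ> piv) (\<kappa> \<circ> c) a b)"
proof -
  let ?R = "changed_rows c"
  have c_entry: "(k, c k) \<in> nonpivot_entries" if "k \<in> ?R" for k
    using c that unfolding admissible_def changed_rows_def by auto
  have "vandermonde (\<kappa> \<circ> c) N = vandermonde (\<kappa> \<circ> piv) N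
      * (\<Prod>k\<in>?R. \<Prod>l\<in>{..<N} - {k}. ((\<kappa> \<circ> piv) l - (\<kappa> \<circ> c) k) / ((\<kappa> \<circ> piv) l - (\<kappa> \<circ> piv) k))
      * (\<Prod>(a, b)\<in>strict_pairs N \<inter> ?R \<times> ?R. cross_ratio (\<kappa> \<circ> piv) (\<kappa> \<circ> c) a b)"
  proof (rule vandermonde_ratio)
    show "\<And>a b. a < N \<Longrightarrow> b < N \<Longrightarrow> a \<noteq> b \<Longrightarrow> (\<kappa> \<circ> piv) a \<noteq> (\<kappa> \<circ> piv) b"
      using \<kappa>_pivot_inj by auto
    show "\<And>a b. a < N \<Longrightarrow> b < N \<Longrightarrow> a \<noteq> b \<Longrightarrow> b \<in> ?R \<Longrightarrow> (\<kappa> \<circ> piv) a \<noteq> (\<kappa> \<circ> c) b"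
      using \<kappa>_entry_ne_pivot c_entry by auto
  qed (auto simp: changed_rows_def)
  then show ?thesis by (simp add: replacement_factor_def)
qed

lemma tau_term_div_E_pivots:
  assumes c: "c \<in> admissible"
  shows "tau_term A \<kappa> x y t c / E_fun \<kappa> (piv ` {..<N}) x y t = theta_term x y t (marks c)"
proof -
  let ?R = "changed_rows c"
  let ?cross = "\<Prod>(a, b)\<in>strict_pairs N \<inter> ?R \<times> ?R. cross_ratio (\<kappa> \<circ> piv) (\<kappa> \<circ> c) a b"
  have E: "E_fun \<kappa> (piv ` {..<N}) x y t = vandermonde (\<kappa> \<circ> piv) N * exp (\<Sum>k<N. xi \<kappa> (piv k) x y t)"
    by (rule E_fun_image) (simp add: piv_strict_mono)
  have A_R: "(\<Prod>k<N. A $$ (k, c k)) = (\<Prod>k\<in>?R. A $$ (k, c k))"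
    by (rule prod.mono_neutral_right) (auto simp: changed_rows_def A_pivot)
  have exp_R: "exp (\<Sum>k<N. xi \<kappa> (c k) x y t) / exp (\<Sum>k<N. xi \<kappa> (piv k) x y t)
      = (\<Prod>k\<in>?R. exp (xi \<kappa> (c k) x y t - xi \<kappa> (piv k) x y t))"
  proof -
    have "exp (\<Sum>k<N. xi \<kappa> (c k) x y t) / exp (\<Sum>k<N. xi \<kappa> (piv k) x y t)
        = (\<Prod>k<N. exp (xi \<kappa> (c k) x y t - xi \<kappa> (piv k) x y t))"
      by (simp add: exp_sum prod_dividef[symmetric] exp_diff)
    also have "\<dots> = (\<Prod>k\<in>?R. exp (xi \<kappa> (c k) x y t - xi \<kappa> (piv k) x y t))"
      by (rule prod.mono_neutral_right) (auto simp: changed_rows_def)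
    finally show ?thesis .
  qed
  have "tau_term A \<kappa> x y t c / E_fun \<kappa> (piv ` {..<N}) x y t
      = (\<Prod>k\<in>?R. A $$ (k, c k)) * (vandermonde (\<kappa> \<circ> c) N / vandermonde (\<kappa> \<circ> piv) N)
        * (exp (\<Sum>k<N. xi \<kappa> (c k) x y t) / exp (\<Sum>k<N. xi \<kappa> (piv k) x y t))"
    unfolding tau_term_def dim_row E A_R by simp
  also have "\<dots> = (\<Prod>k\<in>?R. A $$ (k, c k)) * ((\<Prod>k\<in>?R. replacement_factor k (c k)) * ?cross)
        * (\<Prod>k\<in>?R. exp (xi \<kappa> (c k) x y t - xi \<kappa> (piv k) x y t))"
    unfolding exp_R vandermonde_admissible[OF c] using vandermonde_pivots_pos by simp
  also have "\<dots> = theta_term x y t (marks c)"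
    unfolding theta_term_def coupling_marks[OF c] exp_marks_phi_tilde[OF c] prod.distrib
    by (simp add: mult_ac)
  finally show ?thesis .
qed

theorem tau_div_E_pivots_eq_theta_tilde:
  "tau A \<kappa> x y t / E_fun \<kappa> (piv ` {..<N}) x y t = theta_tilde A piv \<kappa> x y t"
proof -
  have "tau A \<kappa> x y t / E_fun \<kappa> (piv ` {..<N}) x y t
      = (\<Sum>c\<in>admissible. tau_term A \<kappa> x y t c / E_fun \<kappa> (piv ` {..<N}) x y t)"
    unfolding tau_eq_sum_admissible by (rule sum_divide_distrib)
  also have "\<dots> = (\<Sum>c\<in>admissible. theta_term x y t (marks c))"
    by (intro sum.cong refl tau_term_div_E_pivots)
  also have "\<dots> = theta_tilde A piv \<kappa> x y t"
    by (rule theta_tilde_eq_sum_admissible[symmetric])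
  finally show ?thesis .
qed

end

theorem mainTheorem7:
  fixes A :: "real mat" and \<kappa> :: "nat \<Rightarrow> real" and piv :: "nat \<Rightarrow> nat"
    and N M :: nat and x y t :: real
  assumes "dim_row A = N" and "dim_col A = M" and "N < M"
    and "\<And>i j. i < j \<Longrightarrow> j < M \<Longrightarrow> \<kappa> i < \<kappa> j"
    and "rref_with_pivots A piv"
    and "totally_nonneg A"
    and "irreducible_rref A piv"
  shows "tau A \<kappa> x y t / E_fun \<kappa> (piv ` {..<N}) x y t = theta_tilde A piv \<kappa> x y t"
proof -
  interpret tnn_echelon A \<kappa> piv N M
    using assms by unfold_locales auto
  show ?thesis by (rule tau_div_E_pivots_eq_theta_tilde)
qed

end
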